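(* Let $q$ be a power of an odd prime $p$, $G=\mathrm{SU}_3(q)$, and let $\mathcal{C}=C_2^{(0)}$. Then $K_{\mathcal{C}}$ is irreducible.
   Context: $\mathrm{SU}_3(q)$ is the group of determinant-one matrices $M\in\mathrm{GL}_3(q^2)$ with $M^*JM=J$, where $J$ has ones on the anti-diagonal and zeros elsewhere and $M^*$ is the transpose of $M$ with every entry raised to the $q$-th power. $C_2^{(0)}$ is the $\mathrm{SU}_3(q)$-conjugacy class containing the matrices $\begin{pmatrix}1&0&a\\0&1&0\\0&0&1\end{pmatrix}$ with $a\in\mathbb{F}_{q^2}^\times$, $a+a^q=0$. For a finite group $G$ and a subset $\mathcal{C}\subseteq G\setminus\{1\}$ closed under conjugation, the Killing form is $K_{\mathcal{C}}(a,b)=|C_G(ab)\cap\mathcal{C}|$ on the basis $\mathcal{C}$; it is irreducible if the graph with vertex set $\mathcal{C}$, in which distinct $a,b$ are adjacent iff $C_G(ab)\cap\mathcal{C}\neq\emptyset$, is connected. *)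

theory Defs
  imports "HOL-Analysis.Analysis"
begin

text \<open>3x3 matrices over a finite field 'a of order q^2 (q a prime power).
  Indices of type 3 are 0, 1, 2.\<close>

definition antidiag_J :: "'a::field ^3^3" where
  "antidiag_J = (\<chi> i j. if (i = 0 \<and> j = 2) \<or> (i = 1 \<and> j = 1) \<or> (i = 2 \<and> j = 0)
                         then 1 else 0)"

definition frob_transpose :: "nat \<Rightarrow> 'a::field ^3^3 \<Rightarrow> 'a ^3^3" where
  "frob_transpose q M = (\<chi> i j. (M $ j $ i) ^ q)"

definition SU3 :: "nat \<Rightarrow> ('a::field ^3^3) set" where
  "SU3 q = {M. det M = 1 \<and> frob_transpose q M ** antidiag_J ** M = antidiag_J}"

definition transvection :: "'a::field \<Rightarrow> 'a ^3^3" where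
  "transvection a = (\<chi> i j. if i = j then 1 else if i = 0 \<and> j = 2 then a else 0)"

definition conj_class :: "('a::field ^3^3) set \<Rightarrow> 'a ^3^3 \<Rightarrow> ('a ^3^3) set" where
  "conj_class G x = {g ** x ** matrix_inv g | g. g \<in> G}"

definition centralizer :: "('a::field ^3^3) set \<Rightarrow> 'a ^3^3 \<Rightarrow> ('a ^3^3) set" where
  "centralizer G x = {g \<in> G. g ** x = x ** g}"

definition C20 :: "nat \<Rightarrow> ('a::field ^3^3) set" where
  "C20 q = (\<Union>a \<in> {a. a \<noteq> 0 \<and> a + a ^ q = 0}. conj_class (SU3 q) (transvection a))"

text \<open>Commuting graph underlying the Killing form K_C: vertices C, distinct a b adjacent
  iff C_G(ab) meets C.\<close>
definition killing_edges :: "('a::field ^3^3) set \<Rightarrow> ('a ^3^3) set \<Rightarrow> (('a ^3^3) \<times> ('a ^3^3)) set" where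
  "killing_edges G C = {(a, b). a \<in> C \<and> b \<in> C \<and> a \<noteq> b \<and> centralizer G (a ** b) \<inter> C \<noteq> {}}"

definition killing_irreducible :: "('a::field ^3^3) set \<Rightarrow> ('a ^3^3) set \<Rightarrow> bool" where
  "killing_irreducible G C \<longleftrightarrow> (\<forall>a \<in> C. \<forall>b \<in> C. (a, b) \<in> (killing_edges G C)\<^sup>*)"

end

theory Submission
  imports Defs "HOL-Number_Theory.Residues"
begin

text \<open>Every element of \<open>C\<close> is a unitary transvection \<open>t(a, v) = 1 + a v v\<^sup>* J\<close>, i.e.
  \<open>u \<mapsto> u + a \<langle>v, u\<rangle> v\<close>, with \<open>v\<close> isotropic for the Hermitian form \<open>\<langle>u, w\<rangle> = u\<^sup>* J w\<close> and
  \<open>a + a\<^sup>q = 0\<close>. Transvections with orthogonal centres commute, so \<open>x\<close> itself centralises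
  \<open>x y\<close>. If \<open>x = t(a, v)\<close> and \<open>y = t(b, w)\<close> with \<open>B = \<langle>v, w\<rangle> \<noteq> 0\<close>, pass from \<open>x\<close> to the
  commuting element \<open>x' = t(a', v)\<close>, where \<open>a' = -4 / (b B B\<^sup>q)\<close> is chosen so that \<open>x' y\<close>
  sends \<open>z = v - (b/2) B\<^sup>q w\<close> to \<open>-z\<close>. Since \<open>g t(a, z) g\<^sup>-\<^sup>1 = t(a, g z)\<close> and
  \<open>t(a, -z) = t(a, z)\<close>, the element \<open>t(a', z) \<in> C\<close> centralises \<open>x' y\<close>. Hence any two
  elements of \<open>C\<close> are joined by a path of length at most two. The finite field enters only
  through \<open>x \<mapsto> x\<^sup>q\<close> being an additive involution and through \<open>2 \<noteq> 0\<close>.\<close>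

text \<open>A bilinear dot product: HOL's \<open>inner\<close> on vectors is defined over the reals only.\<close>

definition vdot :: "'a::comm_semiring_0^'n \<Rightarrow> 'a^'n \<Rightarrow> 'a" where
  "vdot x y = (\<Sum>i\<in>UNIV. x$i * y$i)"

lemma vdot_add_right: "vdot x (y + z) = vdot x y + vdot x z"
  by (simp add: vdot_def distrib_left sum.distrib)

lemma vdot_scale_right: "vdot x (c *s y) = c * vdot x (y :: 'a::comm_semiring_0^'n)"
  by (simp add: vdot_def sum_distrib_left mult.left_commute)

lemma vdot_vector_matrix_mult: "vdot (x v* A) y = vdot x (A *v (y :: 'a::comm_semiring_1^'n))"
  by (simp add: vdot_def vector_matrix_mult_def matrix_vector_mult_def
      sum_distrib_left sum_distrib_right ac_simps sum.swap[where B = "UNIV :: 'n set"])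

definition outer_prod :: "'a::times^'m \<Rightarrow> 'a^'n \<Rightarrow> 'a^'n^'m" where
  "outer_prod x y = (\<chi> i j. x$i * y$j)"

lemma outer_prod_mult_vector: "outer_prod x y *v z = vdot y z *s (x :: 'a::comm_semiring_1^'m)"
  by (simp add: vec_eq_iff outer_prod_def matrix_vector_mult_def vdot_def sum_distrib_left ac_simps)

lemma invertible_mult_matrix_inv:
  assumes "invertible (A :: 'a::semiring_1^'n^'m)"
  shows "A ** matrix_inv A = mat 1"
proof -
  have "A ** matrix_inv A = mat 1 \<and> matrix_inv A ** A = mat 1"
    using assms unfolding invertible_def matrix_inv_def by (rule someI_ex)
  then show ?thesis ..
qed

definition frob_vec :: "nat \<Rightarrow> 'a::power^'n \<Rightarrow> 'a^'n" where
  "frob_vec q v = (\<chi> i. v$i ^ q)"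

definition herm_form :: "nat \<Rightarrow> 'a::field^3 \<Rightarrow> 'a^3 \<Rightarrow> 'a" where
  "herm_form q u w = vdot (frob_vec q u) (antidiag_J *v w)"

definition unitary_transvection :: "nat \<Rightarrow> 'a::field \<Rightarrow> 'a^3 \<Rightarrow> 'a^3^3" where
  "unitary_transvection q a v = mat 1 + outer_prod (a *s v) (frob_vec q v v* antidiag_J)"

lemma herm_form_add_scale_right:
  "herm_form q u (x + c *s y) = herm_form q u x + c * herm_form q u y"
  by (simp add: herm_form_def matrix_vector_right_distrib vector_scalar_commute
      vdot_add_right vdot_scale_right)

lemma unitary_transvection_mult_vector:
  "unitary_transvection q a v *v u = u + (a * herm_form q v u) *s v"
  by (simp add: unitary_transvection_def matrix_vector_mult_add_rdistrib outer_prod_mult_vector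
      vdot_vector_matrix_mult herm_form_def mult.commute)

lemma unitary_transvection_pair_negates:
  fixes v w :: "'a::field^3"
  assumes "herm_form q v v = 0" "herm_form q w w = 0"
    and "b * herm_form q v w * herm_form q w v \<noteq> 0" "(2::'a) \<noteq> 0"
  shows "(unitary_transvection q (-4 / (b * herm_form q v w * herm_form q w v)) v
          ** unitary_transvection q b w) *v (v + (- (b / 2) * herm_form q w v) *s w)
       = - (v + (- (b / 2) * herm_form q w v) *s w)"
proof -
  let ?B = "herm_form q v w" and ?D = "herm_form q w v"
  let ?z = "v + (- (b / 2) * ?D) *s w" and ?y = "v + (b / 2 * ?D) *s w"
  have four: "(4::'a) \<noteq> 0"
    using no_zero_divisors[OF assms(4) assms(4)] by simp
  have "herm_form q w ?z = ?D"
    using assms(2) by (simp only: herm_form_add_scale_right) simp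
  then have y: "unitary_transvection q b w *v ?z = ?y"
    using assms(4) by (simp add: unitary_transvection_mult_vector vec_eq_iff field_simps)
  have "herm_form q v ?y = b / 2 * ?D * ?B"
    using assms(1) by (simp only: herm_form_add_scale_right) simp
  then have "unitary_transvection q (-4 / (b * ?B * ?D)) v *v ?y = - ?z"
    using assms(3,4) four
    by (simp only: unitary_transvection_mult_vector) (simp add: vec_eq_iff field_simps)
  with y show ?thesis
    by (simp add: matrix_vector_mul_assoc[symmetric])
qed

lemma killing_rtrancl_if_centralized:
  assumes "x \<in> C" "y \<in> C" "c \<in> C" "c \<in> G" "c ** (x ** y) = (x ** y) ** c"
  shows "(x, y) \<in> (killing_edges G C)\<^sup>*"
proof (cases "x = y")
  case False
  with assms have "(x, y) \<in> killing_edges G C"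
    by (auto simp: killing_edges_def centralizer_def)
  then show ?thesis by blast
qed simp

lemma killing_rtrancl_if_commute:
  assumes "C \<subseteq> G" "x \<in> C" "y \<in> C" "x ** y = y ** x"
  shows "(x, y) \<in> (killing_edges G C)\<^sup>*"
  by (rule killing_rtrancl_if_centralized[of x C y x]) (use assms in \<open>auto simp: matrix_mul_assoc\<close>)

context
  fixes q :: nat
  assumes frob_add: "\<And>x y :: 'a::field. (x + y) ^ q = x ^ q + y ^ q"
    and frob_frob: "\<And>x :: 'a. (x ^ q) ^ q = x"
begin

lemma frob_zero [simp]: "(0::'a) ^ q = 0"
proof -
  have "q \<noteq> 0" using frob_frob[of 0] by (cases q) auto
  then show ?thesis by simp
qed

lemma frob_neg: "(- x :: 'a) ^ q = - (x ^ q)"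
  using frob_add[of x "- x"] by (simp add: add_eq_0_iff)

lemma frob_of_nat: "(of_nat n :: 'a) ^ q = of_nat n"
  by (induction n) (simp_all add: frob_add)

lemma frob_sum: "(\<Sum>i\<in>A. f i :: 'a) ^ q = (\<Sum>i\<in>A. f i ^ q)"
  by (induction A rule: infinite_finite_induct) (simp_all add: frob_add)

lemma frob_vec_matrix_vector_mult:
  "frob_vec q (A *v v) = frob_vec q v v* frob_transpose q (A :: 'a^3^3)"
  by (simp add: vec_eq_iff frob_vec_def frob_transpose_def matrix_vector_mult_def
      vector_matrix_mult_def frob_sum power_mult_distrib mult.commute)

lemma frob_transpose_mult:
  "frob_transpose q (A ** B) = frob_transpose q B ** frob_transpose q (A :: 'a^3^3)"
  by (simp add: vec_eq_iff frob_transpose_def matrix_matrix_mult_def frob_sum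
      power_mult_distrib mult.commute)

lemma frob_transpose_mat_1: "frob_transpose q (mat 1) = (mat 1 :: 'a^3^3)"
  by (simp add: vec_eq_iff frob_transpose_def mat_def)

lemma herm_form_conj_sym: "herm_form q w v = herm_form q v (w :: 'a^3) ^ q"
  by (simp add: herm_form_def vdot_def frob_vec_def antidiag_J_def matrix_vector_mult_def
      sum_3 frob_add power_mult_distrib frob_frob mult.commute)

lemma herm_form_neg_left: "herm_form q (- v) w = - herm_form q v (w :: 'a^3)"
  by (simp add: herm_form_def vdot_def frob_vec_def frob_neg sum_negf)

lemma SU3_mult:
  assumes "A \<in> SU3 q" "B \<in> SU3 q"
  shows "A ** B \<in> (SU3 q :: ('a^3^3) set)"
proof -
  have "frob_transpose q (A ** B) ** antidiag_J ** (A ** B)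
      = frob_transpose q B ** (frob_transpose q A ** antidiag_J ** A) ** B"
    by (simp add: frob_transpose_mult matrix_mul_assoc)
  with assms show ?thesis
    by (simp add: SU3_def det_mul)
qed

lemma SU3_matrix_inv:
  assumes "g \<in> (SU3 q :: ('a^3^3) set)"
  shows "g ** matrix_inv g = mat 1" and "matrix_inv g \<in> SU3 q"
proof -
  have "invertible g"
    using assms by (simp add: SU3_def invertible_det_nz)
  then show right: "g ** matrix_inv g = mat 1"
    by (rule invertible_mult_matrix_inv)
  have det: "det g * det (matrix_inv g) = 1"
    using right by (metis det_I det_mul)
  have "frob_transpose q (matrix_inv g) ** antidiag_J ** matrix_inv g
      = frob_transpose q (matrix_inv g) ** (frob_transpose q g ** antidiag_J ** g) ** matrix_inv g"
    using assms by (simp add: SU3_def)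
  also have "\<dots> = frob_transpose q (g ** matrix_inv g) ** antidiag_J ** (g ** matrix_inv g)"
    by (simp add: frob_transpose_mult matrix_mul_assoc)
  also have "\<dots> = antidiag_J"
    using right by (simp add: frob_transpose_mat_1)
  finally show "matrix_inv g \<in> SU3 q"
    using assms det by (simp add: SU3_def)
qed

lemma herm_form_SU3_invariant:
  assumes "g \<in> (SU3 q :: ('a^3^3) set)"
  shows "herm_form q (g *v u) (g *v w) = herm_form q u w"
proof -
  have "herm_form q (g *v u) (g *v w)
      = vdot (frob_vec q u) ((frob_transpose q g ** antidiag_J ** g) *v w)"
    by (simp add: herm_form_def frob_vec_matrix_vector_mult vdot_vector_matrix_mult
        matrix_vector_mul_assoc matrix_mul_assoc)
  with assms show ?thesis
    by (simp add: SU3_def herm_form_def)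
qed

lemma unitary_transvection_conj:
  assumes "g \<in> (SU3 q :: ('a^3^3) set)"
  shows "g ** unitary_transvection q a v = unitary_transvection q a (g *v v) ** g"
  unfolding matrix_eq
  by (simp add: matrix_vector_mul_assoc[symmetric] unitary_transvection_mult_vector
      matrix_vector_right_distrib vector_scalar_commute herm_form_SU3_invariant[OF assms])

lemma unitary_transvection_neg:
  "unitary_transvection q a (- v) = unitary_transvection q (a :: 'a) v"
  unfolding matrix_eq
  by (simp add: unitary_transvection_mult_vector herm_form_neg_left)

lemma unitary_transvections_commute:
  assumes "herm_form q v w = 0"
  shows "unitary_transvection q a v ** unitary_transvection q b w
       = unitary_transvection q b w ** unitary_transvection q a (v :: 'a^3)"
proof -
  have "herm_form q w v = 0"
    using assms by (simp add: herm_form_conj_sym[of w])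
  with assms show ?thesis
    unfolding matrix_eq
    by (simp add: matrix_vector_mul_assoc[symmetric] unitary_transvection_mult_vector
        herm_form_add_scale_right add_ac)
qed

lemma unitary_transvection_axis:
  "unitary_transvection q a (axis 0 1) = transvection (a :: 'a)"
  by (simp add: unitary_transvection_def transvection_def outer_prod_def frob_vec_def axis_def
      antidiag_J_def vector_matrix_mult_def mat_def vec_eq_iff forall_3 sum_3)

lemma transvection_SU3:
  assumes "a + a ^ q = 0"
  shows "transvection (a :: 'a) \<in> SU3 q"
proof -
  have "a ^ q = - a"
    using assms by (simp add: add_eq_0_iff)
  then show ?thesis
    by (simp add: SU3_def det_3 transvection_def frob_transpose_def antidiag_J_def
        matrix_matrix_mult_def vec_eq_iff forall_3 sum_3)
qed

lemma conj_transvection: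
  assumes "g \<in> SU3 q"
  shows "g ** transvection a ** matrix_inv g = unitary_transvection q (a :: 'a) (g *v axis 0 1)"
proof -
  have "g ** transvection a ** matrix_inv g
      = unitary_transvection q a (g *v axis 0 1) ** (g ** matrix_inv g)"
    by (simp add: unitary_transvection_axis[symmetric] unitary_transvection_conj[OF assms]
        matrix_mul_assoc)
  then show ?thesis
    by (simp add: SU3_matrix_inv(1)[OF assms])
qed

lemma mem_C20_iff:
  "x \<in> C20 q \<longleftrightarrow> (\<exists>a g. a \<noteq> 0 \<and> a + a ^ q = 0 \<and> g \<in> SU3 q
     \<and> x = unitary_transvection q (a :: 'a) (g *v axis 0 1))"
  unfolding C20_def conj_class_def by (auto simp: conj_transvection) (metis conj_transvection)+

lemma unitary_transvection_SU3:
  assumes "a + a ^ q = 0" "g \<in> SU3 q"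
  shows "unitary_transvection q (a :: 'a) (g *v axis 0 1) \<in> SU3 q"
  using assms by (simp add: conj_transvection[symmetric] SU3_mult SU3_matrix_inv(2) transvection_SU3)

lemma C20_subset_SU3: "C20 q \<subseteq> (SU3 q :: ('a^3^3) set)"
  by (auto simp: mem_C20_iff unitary_transvection_SU3)

lemma herm_form_isotropic:
  assumes "g \<in> SU3 q"
  shows "herm_form q (g *v axis 0 1) (g *v axis 0 1) = (0 :: 'a)"
  by (simp add: herm_form_SU3_invariant[OF assms])
    (simp add: herm_form_def vdot_def frob_vec_def axis_def antidiag_J_def
      matrix_vector_mult_def sum_3)

lemma commute_unitary_transvection_if_negates:
  assumes "g \<in> SU3 q" "g *v z = - z"
  shows "g ** unitary_transvection q a z = unitary_transvection q (a :: 'a) z ** g"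
  using assms by (simp add: unitary_transvection_conj unitary_transvection_neg)

lemma C20_centralizer_nonorthogonal:
  fixes b :: 'a and g h :: "'a^3^3"
  assumes two: "(2::'a) \<noteq> 0" and g: "g \<in> SU3 q" and h: "h \<in> SU3 q"
    and b: "b \<noteq> 0" "b + b ^ q = 0"
    and B: "herm_form q (g *v axis 0 1) (h *v axis 0 1) \<noteq> 0"
  obtains a' where "a' \<noteq> 0" "a' + a' ^ q = 0"
    and "centralizer (SU3 q) (unitary_transvection q a' (g *v axis 0 1)
           ** unitary_transvection q b (h *v axis 0 1)) \<inter> C20 q \<noteq> {}"
proof -
  define v w where "v = g *v axis 0 1" and "w = h *v axis 0 1"
  define D where "D = herm_form q w v"
  define a' where "a' = -4 / (b * herm_form q v w * D)"
  define M where "M = unitary_transvection q (- (b / 2)) w"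
  define z where "z = v + (- (b / 2) * D) *s w"
  have bq: "b ^ q = - b"
    using b(2) by (simp add: add_eq_0_iff)
  have D: "D = herm_form q v w ^ q" "herm_form q v w = D ^ q"
    by (simp_all add: D_def herm_form_conj_sym[of w] frob_frob)
  have nz: "b * herm_form q v w * D \<noteq> 0"
    using b(1) B D(1) by (simp add: v_def w_def)
  have "a' ^ q = -4 / ((- b) * D * herm_form q v w)"
    using frob_of_nat[of 4] by (simp add: a'_def power_divide power_mult_distrib frob_neg bq D[symmetric])
  moreover have "(4::'a) \<noteq> 0"
    using no_zero_divisors[OF two two] by simp
  ultimately have a': "a' \<noteq> 0" "a' + a' ^ q = 0"
    using nz by (simp_all add: a'_def mult_ac)
  have "- (b / 2) + (- (b / 2)) ^ q = 0"
    using frob_of_nat[of 2] by (simp add: frob_neg power_divide bq)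
  then have M_SU3: "M \<in> SU3 q"
    unfolding M_def w_def using h by (rule unitary_transvection_SU3)
  have "z = (M ** g) *v axis 0 1"
    by (simp add: z_def M_def D_def v_def matrix_vector_mul_assoc[symmetric]
        unitary_transvection_mult_vector)
  then have c_C20: "unitary_transvection q a' z \<in> C20 q"
    using a' M_SU3 g by (auto simp: mem_C20_iff intro: SU3_mult)
  have "unitary_transvection q a' v ** unitary_transvection q b w \<in> SU3 q"
    using a'(2) b(2) g h by (simp add: v_def w_def SU3_mult unitary_transvection_SU3)
  moreover have "(unitary_transvection q a' v ** unitary_transvection q b w) *v z = - z"
    unfolding a'_def z_def D_def
    using herm_form_isotropic[OF g] herm_form_isotropic[OF h] nz two
    by (intro unitary_transvection_pair_negates) (simp_all add: v_def w_def D_def)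
  ultimately have "unitary_transvection q a' z
      \<in> centralizer (SU3 q) (unitary_transvection q a' v ** unitary_transvection q b w)"
    using c_C20 C20_subset_SU3
    by (auto simp: centralizer_def commute_unitary_transvection_if_negates)
  with a' c_C20 that show ?thesis
    by (auto simp: v_def w_def)
qed

lemma killing_irreducible_C20:
  assumes "(2::'a) \<noteq> 0"
  shows "killing_irreducible (SU3 q :: ('a^3^3) set) (C20 q)"
  unfolding killing_irreducible_def
proof (intro ballI)
  fix x y :: "'a^3^3"
  assume x: "x \<in> C20 q" and y: "y \<in> C20 q"
  then obtain a g b h where ag: "a \<noteq> 0" "a + a ^ q = 0" "g \<in> SU3 q"
      and x_eq: "x = unitary_transvection q a (g *v axis 0 1)"
      and bh: "b \<noteq> 0" "b + b ^ q = 0" "h \<in> SU3 q"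
      and y_eq: "y = unitary_transvection q b (h *v axis 0 1)"
    by (auto simp: mem_C20_iff)
  show "(x, y) \<in> (killing_edges (SU3 q) (C20 q))\<^sup>*"
  proof (cases "herm_form q (g *v axis 0 1) (h *v axis 0 1) = 0")
    case True
    then have "x ** y = y ** x"
      unfolding x_eq y_eq by (rule unitary_transvections_commute)
    then show ?thesis
      by (rule killing_rtrancl_if_commute[OF C20_subset_SU3 x y])
  next
    case False
    then obtain a' where a': "a' \<noteq> 0" "a' + a' ^ q = 0"
      and "centralizer (SU3 q) (unitary_transvection q a' (g *v axis 0 1) ** y) \<inter> C20 q \<noteq> {}"
      using C20_centralizer_nonorthogonal[OF assms ag(3) bh(3) bh(1,2)] y_eq by blast
    moreover define x' where "x' = unitary_transvection q a' (g *v axis 0 1)"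
    ultimately obtain c where c: "c \<in> C20 q" "c \<in> SU3 q" "c ** (x' ** y) = (x' ** y) ** c"
      by (auto simp: centralizer_def)
    have x': "x' \<in> C20 q"
      using a' ag(3) by (auto simp: mem_C20_iff x'_def)
    have "x ** x' = x' ** x"
      unfolding x_eq x'_def using herm_form_isotropic[OF ag(3)] by (rule unitary_transvections_commute)
    then have "(x, x') \<in> (killing_edges (SU3 q) (C20 q))\<^sup>*"
      by (rule killing_rtrancl_if_commute[OF C20_subset_SU3 x x'])
    also have "(x', y) \<in> (killing_edges (SU3 q) (C20 q))\<^sup>*"
      using x' y c by (rule killing_rtrancl_if_centralized)
    finally show ?thesis .
  qed
qed

end

lemma finite_field_power_card:
  fixes x :: "'a::{finite,field}"
  shows "x ^ CARD('a) = x"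
proof (cases "x = 0")
  case False
  define G :: "'a monoid" where "G = \<lparr>carrier = UNIV - {0}, mult = (*), one = 1\<rparr>"
  have G_ops: "carrier G = UNIV - {0}" "\<one>\<^bsub>G\<^esub> = 1" "\<And>y z. y \<otimes>\<^bsub>G\<^esub> z = y * z"
    by (simp_all add: G_def)
  interpret G: comm_group G
    by (rule comm_groupI) (auto simp: G_ops intro!: bexI[of _ "inverse _"])
  have pow: "y [^]\<^bsub>G\<^esub> n = y ^ n" for y :: 'a and n :: nat
    by (induction n) (simp_all add: G_ops mult.commute)
  have "x ^ card (carrier G) = 1"
    using G.power_order_eq_one[of x] False by (simp add: G_ops pow)
  moreover have "CARD('a) = Suc (card (carrier G))"
    by (simp add: G_ops card_Diff_subset)
  ultimately show ?thesis
    by simp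
qed simp

lemma CHAR_eq_of_card_prime_power:
  assumes "prime p" and "CARD('a::{finite,field}) = p ^ n"
  shows "CHAR('a) = p"
proof -
  have "prime CHAR('a)"
    by (simp add: prime_CHAR_semidom finite_imp_CHAR_pos)
  moreover have "CHAR('a) dvd p ^ n"
    using CHAR_dvd_CARD[where 'a = 'a] assms(2) by simp
  ultimately show ?thesis
    using assms(1) by (metis prime_dvd_power primes_dvd_imp_eq)
qed

theorem corollary4p6:
  fixes p q k :: nat
  assumes "prime p" and "odd p" and "k \<ge> 1" and "q = p ^ k"
    and "CARD('a::{finite, field}) = q ^ 2"
  shows "killing_irreducible (SU3 q :: ('a ^3^3) set) (C20 q)"
proof -
  have char: "CHAR('a) = p"
    using assms(1,4,5) by (intro CHAR_eq_of_card_prime_power[of p "k * 2"]) (simp_all add: power_mult)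
  have frob_add: "(x + y) ^ q = x ^ q + y ^ q" for x y :: 'a
    using assms(1,4) char by (intro freshmans_dream') simp_all
  have frob_frob: "(x ^ q) ^ q = x" for x :: 'a
    using finite_field_power_card[of x] assms(5) by (simp add: power_mult[symmetric] power2_eq_square)
  have "\<not> p dvd 2"
    using assms(1,2) primes_dvd_imp_eq[OF assms(1) two_is_prime_nat] by auto
  then have "(2::'a) \<noteq> 0"
    using of_nat_eq_0_iff_char_dvd[of 2, where 'a = 'a] char by simp
  then show ?thesis
    by (rule killing_irreducible_C20[OF frob_add frob_frob])
qed

end
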